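(* Let $G$ be a finite simple graph on $2i$ vertices and $e$ a pair of distinct vertices of $G$. Then $$a(G+e)=a(G)+\sum_{J\in\mathcal{E}\mathcal{C}(G+e)\setminus\mathcal{E}\mathcal{C}(G)}|b(G|_J)|\cdot a\big((G+e)^\ast_J\big).$$
   Context: All graphs are finite simple graphs; $G|_I$ is the induced subgraph on $I\subseteq V(G)$. The signed $a$-number: $sa(\emptyset)=1$ for the null graph; if $G$ has connected components $G_1,\dots,G_\ell$, $sa(G)=\prod_k sa(G_k)$; if $G$ is connected and nonempty, $sa(G)=-\sum_{I\subsetneq V(G)}sa(G|_I)$ when $|V(G)|$ is even and $sa(G)=0$ when $|V(G)|$ is odd. The $a$-number is $a(G)=|sa(G)|$ and the $b$-number is $b(G)=\sum_{I\subseteq V(G)}sa(G|_I)$. $\mathcal{E}\mathcal{C}(G)=\{I\subseteq V(G): G|_I\text{ has no connected component of odd order}\}$. $G+e$ is $G$ with $e$ added as an edge. The reconnected complement $H^\ast_J$ of $J\subseteq V(H)$ is the graph on $V(H)\setminus J$ in which $\{a,b\}$ is an edge iff there is a path from $a$ to $b$ in $H|_{J\cup\{a,b\}}$. *)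

theory Defs
  imports Main
begin

text \<open>Induced subgraphs G|_I are represented by the pair (I, E):
  only edges with both endpoints in I are taken into account.\<close>

definition simple_graph :: "'a set \<Rightarrow> 'a set set \<Rightarrow> bool" where
  "simple_graph V E \<longleftrightarrow> finite V \<and> (\<forall>e\<in>E. \<exists>x y. x \<in> V \<and> y \<in> V \<and> x \<noteq> y \<and> e = {x, y})"

definition adj :: "'a set set \<Rightarrow> 'a set \<Rightarrow> 'a \<Rightarrow> 'a \<Rightarrow> bool" where
  "adj E V x y \<longleftrightarrow> x \<in> V \<and> y \<in> V \<and> x \<noteq> y \<and> {x, y} \<in> E"

definition reach :: "'a set set \<Rightarrow> 'a set \<Rightarrow> 'a \<Rightarrow> 'a \<Rightarrow> bool" where
  "reach E V x y \<longleftrightarrow> x \<in> V \<and> y \<in> V \<and> (adj E V)\<^sup>*\<^sup>* x y"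

definition components :: "'a set set \<Rightarrow> 'a set \<Rightarrow> 'a set set" where
  "components E V = {C. \<exists>v\<in>V. C = {u. reach E V v u}}"

definition connected_graph :: "'a set set \<Rightarrow> 'a set \<Rightarrow> bool" where
  "connected_graph E V \<longleftrightarrow> V \<noteq> {} \<and> (\<forall>x\<in>V. \<forall>y\<in>V. reach E V x y)"

lemma adj_sym: "adj E V x y \<Longrightarrow> adj E V y x"
  unfolding adj_def by (auto simp: insert_commute)

lemma rt_sym: "(adj E V)\<^sup>*\<^sup>* x y \<Longrightarrow> (adj E V)\<^sup>*\<^sup>* y x"
  by (induction rule: rtranclp_induct)
     (auto intro: converse_rtranclp_into_rtranclp adj_sym)

lemma reach_sym: "reach E V x y \<Longrightarrow> reach E V y x"
  unfolding reach_def using rt_sym by metis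

lemma reach_trans: "reach E V x y \<Longrightarrow> reach E V y z \<Longrightarrow> reach E V x z"
  unfolding reach_def by auto

lemma component_psubset:
  assumes "C \<in> components E V" "\<not> connected_graph E V" "V \<noteq> {}"
  shows "C \<subset> V"
proof -
  obtain v where v: "v \<in> V" "C = {u. reach E V v u}" using assms(1) unfolding components_def by blast
  have sub: "C \<subseteq> V" using v unfolding reach_def by auto
  show ?thesis
  proof (rule ccontr)
    assume "\<not> C \<subset> V"
    then have "C = V" using sub by blast
    then have "\<forall>x\<in>V. reach E V v x" using v by auto
    then have "\<forall>x\<in>V. \<forall>y\<in>V. reach E V x y" by (meson reach_sym reach_trans)
    then show False using assms(2,3) unfolding connected_graph_def by blast
  qed
qed

function sa :: "'a set set \<Rightarrow> 'a set \<Rightarrow> int" where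
  "sa E V = (if \<not> finite V then 0
     else if V = {} then 1
     else if connected_graph E V then
       (if even (card V) then - (\<Sum>I\<in>{I. I \<subset> V}. sa E I) else 0)
     else (\<Prod>C\<in>components E V. sa E C))"
  by pat_completeness auto
termination
  apply (relation "measure (\<lambda>(E, V). card V)")
    apply simp
   apply (simp add: psubset_card_mono)
  apply (simp add: psubset_card_mono component_psubset)
  done

declare sa.simps [simp del]

definition a_num :: "'a set set \<Rightarrow> 'a set \<Rightarrow> int" where
  "a_num E V = \<bar>sa E V\<bar>"

definition b_num :: "'a set set \<Rightarrow> 'a set \<Rightarrow> int" where
  "b_num E V = (\<Sum>I\<in>Pow V. sa E I)"

definition EC :: "'a set set \<Rightarrow> 'a set \<Rightarrow> 'a set set" where
  "EC E V = {I. I \<subseteq> V \<and> (\<forall>C\<in>components E I. even (card C))}"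

definition recon_edges :: "'a set set \<Rightarrow> 'a set \<Rightarrow> 'a set \<Rightarrow> 'a set set" where
  "recon_edges E V J = {{x, y} | x y. x \<in> V - J \<and> y \<in> V - J \<and> x \<noteq> y \<and> reach E (J \<union> {x, y}) x y}"

end

theory Submission
  imports Defs
begin

(* Write H = G + uv. By induction on |W|,
     sa(H|W) = sa(G|W) - sum over J of b(G|J) * sa(H*_J |(W - J)),
   where J ranges over the subsets of W containing u and v such that H|J is connected but G|J is
   not. When H|W is disconnected, sa factors over the component of u; when it is connected of
   even order, b(H|W) = 0 and the identity follows by summing over all subsets of W, because
   every b(G|J) * b(H*_J |(W - J)) with J a proper subset vanishes. Summing the identity over
   subsets gives the same formula for b. Removing one edge at a time, the two formulas show by
   induction that (-1)^(|W|/2) sa(G|W) >= 0 for |W| even and (-1)^((|W|-1)/2) b(G|W) >= 0 for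
   G|W connected of odd order. Hence all terms of the sa-formula for |W| even have the sign of
   sa(G|W), and taking absolute values gives a formula for a. Finally, b(G|J) is zero unless all
   components of G|J have odd order, and for such J the condition on J is equivalent to
   J being in EC(H) - EC(G). *)

definition separated :: "'a set set \<Rightarrow> 'a set \<Rightarrow> 'a set \<Rightarrow> bool" where
  "separated E A B \<longleftrightarrow> (\<forall>a\<in>A. \<forall>b\<in>B. {a, b} \<notin> E)"

lemma separated_sym: "separated E A B \<Longrightarrow> separated E B A"
  unfolding separated_def by (metis insert_commute)

lemma separated_mono: "separated F A B \<Longrightarrow> E \<subseteq> F \<Longrightarrow> A' \<subseteq> A \<Longrightarrow> B' \<subseteq> B \<Longrightarrow> separated E A' B'"
  unfolding separated_def by blast

lemma rtranclp_adj_in: "(adj E A)\<^sup>*\<^sup>* x y \<Longrightarrow> x \<in> A \<Longrightarrow> y \<in> A"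
  by (induction rule: rtranclp_induct) (auto simp: adj_def)

lemma reach_refl: "x \<in> W \<Longrightarrow> reach E W x x"
  unfolding reach_def by auto

lemma reach_in: "reach E W x y \<Longrightarrow> x \<in> W \<and> y \<in> W"
  unfolding reach_def by auto

lemma adj_imp_reach: "adj E W x y \<Longrightarrow> reach E W x y"
  unfolding reach_def adj_def by auto

lemma reach_mono: "A \<subseteq> B \<Longrightarrow> E \<subseteq> F \<Longrightarrow> reach E A x y \<Longrightarrow> reach F B x y"
  unfolding reach_def
  using rtranclp_mono[of "adj E A" "adj F B"] by (auto simp: adj_def le_fun_def)

lemma rtranclp_adj_separated:
  assumes "(adj E W)\<^sup>*\<^sup>* x y" "x \<in> A" "A \<subseteq> W" "separated E A (W - A)"
  shows "(adj E A)\<^sup>*\<^sup>* x y"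
  using assms(1)
proof (induction rule: rtranclp_induct)
  case (step y z)
  have "y \<in> A" using step.IH assms(2) by (rule rtranclp_adj_in)
  with step.hyps(2) assms(4) have "adj E A y z"
    unfolding adj_def separated_def by blast
  with step.IH show ?case by simp
qed simp

lemma reach_separated:
  "reach E W x y \<Longrightarrow> x \<in> A \<Longrightarrow> A \<subseteq> W \<Longrightarrow> separated E A (W - A) \<Longrightarrow> reach E A x y"
  using rtranclp_adj_separated rtranclp_adj_in unfolding reach_def by metis

lemma reach_doubleton_imp_edge: "reach E {x, y} x y \<Longrightarrow> x \<noteq> y \<Longrightarrow> {x, y} \<in> E"
  unfolding reach_def by (erule conjE)+ (erule converse_rtranclpE, auto simp: adj_def)

lemma reach_Un_separated:
  assumes "separated E A B" "x \<in> A"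
  shows "reach E (A \<union> B) x y \<longleftrightarrow> reach E A x y"
proof
  have "separated E A (A \<union> B - A)"
    using assms(1) by (rule separated_mono) auto
  then show "reach E (A \<union> B) x y \<Longrightarrow> reach E A x y"
    using assms(2) by (auto intro: reach_separated)
qed (auto intro: reach_mono)

abbreviation component_of :: "'a set set \<Rightarrow> 'a set \<Rightarrow> 'a \<Rightarrow> 'a set" where
  "component_of E W x \<equiv> {y. reach E W x y}"

lemma components_eq_image: "components E W = component_of E W ` W"
  unfolding components_def by auto

lemma component_of_subset: "component_of E W x \<subseteq> W"
  by (auto dest: reach_in)

lemma component_of_self: "x \<in> W \<Longrightarrow> x \<in> component_of E W x"
  by (simp add: reach_refl)

lemma component_of_separated:
  "separated E (component_of E W x) (W - component_of E W x)"
  unfolding separated_def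
proof (intro ballI notI)
  fix a b assume a: "a \<in> component_of E W x" and b: "b \<in> W - component_of E W x"
    and "{a, b} \<in> E"
  then have "adj E W a b" unfolding adj_def using reach_in by fastforce
  then have "reach E W x b" using a adj_imp_reach reach_trans by (metis mem_Collect_eq)
  with b show False by blast
qed

lemma connected_component_of:
  assumes "x \<in> W"
  shows "connected_graph E (component_of E W x)"
  unfolding connected_graph_def
proof (intro conjI ballI)
  show "component_of E W x \<noteq> {}" using component_of_self[OF assms] by blast
  fix a b assume a: "a \<in> component_of E W x" and b: "b \<in> component_of E W x"
  then have "reach E W a b" using reach_sym reach_trans by (metis mem_Collect_eq)
  then show "reach E (component_of E W x) a b"
    using a component_of_subset component_of_separated by (rule reach_separated)
qed

lemma components_connected:
  assumes "connected_graph E W"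
  shows "components E W = {W}"
proof -
  have "component_of E W x = W" if "x \<in> W" for x
  proof
    show "W \<subseteq> component_of E W x" using assms that unfolding connected_graph_def by blast
  qed (rule component_of_subset)
  moreover have "W \<noteq> {}" using assms unfolding connected_graph_def by blast
  ultimately show ?thesis by (auto simp: components_def)
qed

lemma components_subset: "C \<in> components E W \<Longrightarrow> C \<subseteq> W"
  by (auto simp: components_def dest: reach_in)

lemma components_nonempty: "C \<in> components E W \<Longrightarrow> C \<noteq> {}"
  by (auto simp: components_def dest: reach_refl)

lemma finite_components: "finite W \<Longrightarrow> finite (components E W)"
  by (simp add: components_eq_image)

lemma components_Un_separated:
  assumes "separated E A B"
  shows "components E (A \<union> B) = components E A \<union> components E B"
proof -
  have "component_of E (A \<union> B) ` A = component_of E A ` A"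
    using reach_Un_separated[OF assms] by (intro image_cong) auto
  moreover have "component_of E (A \<union> B) ` B = component_of E B ` B"
    using reach_Un_separated[OF separated_sym[OF assms]] by (intro image_cong) (auto simp: Un_commute)
  ultimately show ?thesis
    by (simp only: components_eq_image image_Un)
qed

lemma component_of_psubset:
  assumes "x \<in> W" "\<not> connected_graph E W"
  shows "component_of E W x \<subset> W"
proof -
  have "component_of E W x \<in> components E W" using assms(1) by (auto simp: components_def)
  then show ?thesis using assms(2) by (rule component_psubset) (use assms(1) in blast)
qed

lemma not_connected_split:
  assumes "W \<noteq> {}" "\<not> connected_graph E W"
  obtains A where "A \<noteq> {}" "A \<subset> W" "separated E A (W - A)"
proof -
  obtain x where x: "x \<in> W" using assms(1) by blast
  show ?thesis
  proof (rule that[of "component_of E W x"])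
    show "component_of E W x \<noteq> {}" using component_of_self[OF x] by blast
  qed (rule component_of_psubset[OF x assms(2)], rule component_of_separated)
qed

lemma connected_graph_obtain_edge:
  assumes "connected_graph E W" "2 \<le> card W"
  obtains a b where "a \<in> W" "b \<in> W" "a \<noteq> b" "{a, b} \<in> E"
proof -
  obtain x where x: "x \<in> W" using assms(1) unfolding connected_graph_def by blast
  then have "card (W - {x}) \<noteq> 0" using assms(2) by simp
  then have "W - {x} \<noteq> {}" by (metis card.empty)
  then obtain y where y: "y \<in> W" "y \<noteq> x" by blast
  have "(adj E W)\<^sup>*\<^sup>* x y" using assms(1) x y unfolding connected_graph_def reach_def by blast
  then show ?thesis
  proof (rule converse_rtranclpE)
    fix z assume "adj E W x z"
    then have "x \<in> W" "z \<in> W" "x \<noteq> z" "{x, z} \<in> E" by (simp_all add: adj_def)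
    then show ?thesis by (rule that)
  qed (use y in simp)
qed

lemma finite_psubsets: "finite W \<Longrightarrow> finite {I. I \<subset> W}"
  by (rule finite_subset[of _ "Pow W"]) auto

lemma sum_Pow_psubsets:
  "finite W \<Longrightarrow> (\<Sum>I\<in>Pow W. f I) = f W + (\<Sum>I | I \<subset> W. f I)"
proof -
  have "Pow W = insert W {I. I \<subset> W}" by auto
  then show "finite W \<Longrightarrow> ?thesis" by (simp add: finite_psubsets)
qed

lemma card_subset_add_Diff: "finite W \<Longrightarrow> J \<subseteq> W \<Longrightarrow> card W = card J + card (W - J)"
  by (metis card_Diff_subset card_mono finite_subset le_add_diff_inverse)

lemma card_psubset_split:
  assumes "finite W" "A \<subset> W" "A \<noteq> {}"
  shows "card W = card A + card (W - A)" "card A < card W" "card (W - A) < card W"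
proof -
  show "card W = card A + card (W - A)"
    using assms by (metis card_Diff_subset finite_subset le_add_diff_inverse card_mono psubset_imp_subset)
  moreover show "card A < card W" using assms by (simp add: psubset_card_mono)
  moreover have "card A > 0" using assms by (meson card_gt_0_iff finite_subset psubset_imp_subset)
  ultimately show "card (W - A) < card W" by linarith
qed

lemma sa_empty: "sa E {} = 1"
  by (simp add: sa.simps)

lemma sa_eq_prod_components:
  assumes "finite W"
  shows "sa E W = (\<Prod>C\<in>components E W. sa E C)"
proof (cases "W = {}")
  case True
  then show ?thesis by (simp add: sa_empty components_def)
next
  case False
  then show ?thesis
    using assms by (cases "connected_graph E W") (simp_all add: components_connected sa.simps[of E W])
qed

lemma sa_connected_odd: "connected_graph E W \<Longrightarrow> odd (card W) \<Longrightarrow> sa E W = 0"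
  by (subst sa.simps) (auto simp: connected_graph_def)

lemma sa_connected_even:
  "finite W \<Longrightarrow> connected_graph E W \<Longrightarrow> even (card W) \<Longrightarrow> sa E W = - (\<Sum>I | I \<subset> W. sa E I)"
  by (subst sa.simps) (auto simp: connected_graph_def)

lemma sa_Un_separated:
  assumes "finite A" "finite B" "A \<inter> B = {}" "separated E A B"
  shows "sa E (A \<union> B) = sa E A * sa E B"
proof -
  have "components E A \<inter> components E B = {}"
    using assms(3) components_subset components_nonempty by blast
  then show ?thesis
    using assms by (simp add: sa_eq_prod_components components_Un_separated finite_components prod.union_disjoint)
qed

lemma sa_Diff_separated:
  assumes "finite W" "K \<subseteq> W" "separated E K (W - K)"
  shows "sa E W = sa E K * sa E (W - K)"
proof -
  have "sa E (K \<union> (W - K)) = sa E K * sa E (W - K)"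
    using assms by (intro sa_Un_separated) (auto intro: finite_subset)
  moreover have "K \<union> (W - K) = W" using assms(2) by blast
  ultimately show ?thesis by simp
qed

lemma sa_split:
  assumes "finite W" "W \<noteq> {}" "\<not> connected_graph E W"
  obtains A where "A \<noteq> {}" "A \<subset> W" "sa E W = sa E A * sa E (W - A)"
proof -
  obtain A where A: "A \<noteq> {}" "A \<subset> W" "separated E A (W - A)"
    using not_connected_split[OF assms(2,3)] .
  have "sa E W = sa E A * sa E (W - A)"
    using A(2) by (intro sa_Diff_separated[OF assms(1) _ A(3)]) (rule psubset_imp_subset)
  with A(1,2) show ?thesis by (rule that)
qed

lemma sa_odd: "finite W \<Longrightarrow> odd (card W) \<Longrightarrow> sa E W = 0"
proof (induction "card W" arbitrary: W rule: less_induct)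
  case less
  show ?case
  proof (cases "connected_graph E W")
    case False
    moreover have "W \<noteq> {}" using less.prems by auto
    ultimately obtain A where A: "A \<noteq> {}" "A \<subset> W" "sa E W = sa E A * sa E (W - A)"
      using sa_split less.prems(1) by blast
    note card = card_psubset_split[OF less.prems(1) A(2,1)]
    have "odd (card A) \<or> odd (card (W - A))" using card(1) less.prems(2) by auto
    then show ?thesis
      using less.hyps card(2,3) A(2,3) less.prems(1) by (metis finite_Diff finite_subset mult_eq_0_iff psubset_imp_subset)
  qed (use less.prems sa_connected_odd in blast)
qed

lemma adj_cong_edges:
  "(\<And>x y. x \<in> W \<Longrightarrow> y \<in> W \<Longrightarrow> x \<noteq> y \<Longrightarrow> {x, y} \<in> E1 \<longleftrightarrow> {x, y} \<in> E2) \<Longrightarrow> adj E1 W = adj E2 W"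
  by (intro ext) (auto simp: adj_def)

lemma sa_cong_edges:
  "finite W \<Longrightarrow> (\<And>x y. x \<in> W \<Longrightarrow> y \<in> W \<Longrightarrow> x \<noteq> y \<Longrightarrow> {x, y} \<in> E1 \<longleftrightarrow> {x, y} \<in> E2)
    \<Longrightarrow> sa E1 W = sa E2 W"
proof (induction "card W" arbitrary: W rule: less_induct)
  case less
  have "reach E1 W = reach E2 W"
    using adj_cong_edges[of W E1 E2] less.prems(2) by (simp add: reach_def[abs_def])
  then have same: "components E1 W = components E2 W" "connected_graph E1 W = connected_graph E2 W"
    unfolding components_def connected_graph_def by simp_all
  have IH: "sa E1 I = sa E2 I" if "I \<subset> W" for I
    using less.hyps[of I] less.prems that psubset_card_mono[OF less.prems(1) that]
    by (meson finite_subset psubset_imp_subset subsetD)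
  show ?case
  proof (cases "W = {} \<or> connected_graph E1 W")
    case True
    then show ?thesis
      using IH less.prems(1) same(2) by (subst (1 2) sa.simps) (auto intro!: sum.cong)
  next
    case False
    then show ?thesis
      using IH less.prems(1) same component_psubset[of _ E1 W]
      by (subst (1 2) sa.simps) (auto intro!: prod.cong)
  qed
qed

lemma adj_insert_edge_outside:
  "u \<notin> W \<or> v \<notin> W \<Longrightarrow> adj (insert {u, v} E) W = adj E W"
  by (rule adj_cong_edges) (auto simp: doubleton_eq_iff)

lemma sa_insert_edge_outside:
  "finite W \<Longrightarrow> u \<notin> W \<or> v \<notin> W \<Longrightarrow> sa (insert {u, v} E) W = sa E W"
  by (rule sa_cong_edges) (auto simp: doubleton_eq_iff)

lemma b_num_empty: "b_num E {} = 1"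
  by (simp add: b_num_def sa_empty)

lemma b_num_connected_even:
  "finite W \<Longrightarrow> connected_graph E W \<Longrightarrow> even (card W) \<Longrightarrow> b_num E W = 0"
  by (simp add: b_num_def sum_Pow_psubsets sa_connected_even)

lemma b_num_Un_separated:
  assumes "finite A" "finite B" "A \<inter> B = {}" "separated E A B"
  shows "b_num E (A \<union> B) = b_num E A * b_num E B"
proof -
  have "b_num E (A \<union> B) = (\<Sum>(X, Y)\<in>Pow A \<times> Pow B. sa E X * sa E Y)"
    unfolding b_num_def
  proof (rule sum.reindex_bij_witness[where j = "\<lambda>I. (I \<inter> A, I \<inter> B)" and i = "\<lambda>(X, Y). X \<union> Y"])
    fix I assume I: "I \<in> Pow (A \<union> B)"
    have "separated E (I \<inter> A) (I \<inter> B)" using assms(4) by (rule separated_mono) auto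
    then have "sa E ((I \<inter> A) \<union> (I \<inter> B)) = sa E (I \<inter> A) * sa E (I \<inter> B)"
      using assms(1-3) by (intro sa_Un_separated) auto
    moreover have "(I \<inter> A) \<union> (I \<inter> B) = I" using I by blast
    ultimately show "(case (I \<inter> A, I \<inter> B) of (X, Y) \<Rightarrow> sa E X * sa E Y) = sa E I" by simp
  qed (use assms(3) in auto)
  also have "\<dots> = b_num E A * b_num E B"
    by (simp add: b_num_def sum.cartesian_product[symmetric] sum_product)
  finally show ?thesis .
qed

lemma b_num_Diff_separated:
  assumes "finite W" "K \<subseteq> W" "separated E K (W - K)"
  shows "b_num E W = b_num E K * b_num E (W - K)"
proof -
  have "b_num E (K \<union> (W - K)) = b_num E K * b_num E (W - K)"
    using assms by (intro b_num_Un_separated) (auto intro: finite_subset)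
  moreover have "K \<union> (W - K) = W" using assms(2) by blast
  ultimately show ?thesis by simp
qed

lemma b_num_even_component:
  assumes "finite J" "C \<in> components E J" "even (card C)"
  shows "b_num E J = 0"
proof -
  obtain x where x: "x \<in> J" "C = component_of E J x"
    using assms(2) unfolding components_def by blast
  have "C \<subseteq> J" using assms(2) by (rule components_subset)
  then have "b_num E J = b_num E C * b_num E (J - C)"
    using component_of_separated[of E J x] unfolding x(2) by (intro b_num_Diff_separated[OF assms(1)])
  moreover have "b_num E C = 0"
    using b_num_connected_even connected_component_of[OF x(1)] x(2) assms(1,3) \<open>C \<subseteq> J\<close>
    by (metis finite_subset)
  ultimately show ?thesis by simp
qed

lemma b_num_singleton: "b_num E {x} = 1"
proof -
  have "Pow {x} = {{}, {x}}" by blast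
  then show ?thesis by (simp add: b_num_def sa_empty sa_odd)
qed

subsection \<open>Reconnected complements\<close>

text \<open>With ambient vertex set \<open>UNIV\<close> the edge set of \<open>H\<^sup>*\<^sub>J\<close> no longer depends on the vertex
  set, so a single edge set serves all subsets \<open>W - J\<close> at once (see \<open>sa_recon_edges\<close>).\<close>
abbreviation recon :: "'a set set \<Rightarrow> 'a set \<Rightarrow> 'a set set" where
  "recon H J \<equiv> recon_edges H UNIV J"

lemma recon_edges_iff:
  assumes "x \<in> V - J" "y \<in> V - J" "x \<noteq> y"
  shows "{x, y} \<in> recon_edges H V J \<longleftrightarrow> reach H (J \<union> {x, y}) x y"
proof
  assume "{x, y} \<in> recon_edges H V J"
  then obtain a b where "{x, y} = {a, b}" "reach H (J \<union> {a, b}) a b"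
    unfolding recon_edges_def by blast
  then show "reach H (J \<union> {x, y}) x y"
    by (metis doubleton_eq_iff insert_commute reach_sym)
qed (use assms in \<open>auto simp: recon_edges_def\<close>)

lemma sa_recon_edges: "finite V \<Longrightarrow> sa (recon_edges H V J) (V - J) = sa (recon H J) (V - J)"
  by (rule sa_cong_edges) (simp_all add: recon_edges_iff)

lemma recon_separated:
  assumes "separated H K (W - K)" "J \<subseteq> K"
  shows "separated (recon H J) (K - J) (W - K)"
  unfolding separated_def
proof (intro ballI notI)
  fix a b assume a: "a \<in> K - J" and b: "b \<in> W - K" and "{a, b} \<in> recon H J"
  then have r: "reach H (J \<union> {a, b}) a b"
    using recon_edges_iff[of a UNIV J b H] assms(2) by auto
  have s: "separated H (J \<union> {a}) (J \<union> {a, b} - (J \<union> {a}))"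
    by (rule separated_mono[OF assms(1)]) (use assms(2) a b in auto)
  have "reach H (J \<union> {a}) a b"
    by (rule reach_separated[OF r _ _ s]) auto
  then have "b \<in> J \<union> {a}" by (simp add: reach_def)
  then show False using a b assms(2) by auto
qed

lemma recon_outside:
  assumes "separated H K (W - K)" "J \<subseteq> K" "x \<in> W - K" "y \<in> W - K" "x \<noteq> y"
  shows "{x, y} \<in> recon H J \<longleftrightarrow> {x, y} \<in> H"
proof
  assume "{x, y} \<in> recon H J"
  then have r: "reach H (J \<union> {x, y}) x y"
    using recon_edges_iff[of x UNIV J y H] assms by auto
  have s: "separated H {x, y} (J \<union> {x, y} - {x, y})"
    by (rule separated_mono[OF separated_sym[OF assms(1)]]) (use assms(2-4) in auto)
  have "reach H {x, y} x y"
    by (rule reach_separated[OF r _ _ s]) auto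
  then show "{x, y} \<in> H" using assms(5) by (rule reach_doubleton_imp_edge)
next
  assume "{x, y} \<in> H"
  then have "reach H (J \<union> {x, y}) x y"
    using assms(5) by (intro adj_imp_reach) (simp add: adj_def)
  then show "{x, y} \<in> recon H J"
    using recon_edges_iff[of x UNIV J y H] assms by auto
qed

lemma sa_recon_split:
  assumes "finite W" "K \<subseteq> W" "separated H K (W - K)" "J \<subseteq> K"
  shows "sa (recon H J) (W - J) = sa (recon H J) (K - J) * sa H (W - K)"
proof -
  have "W - J = (K - J) \<union> (W - K)" using assms(2,4) by blast
  moreover have "sa (recon H J) ((K - J) \<union> (W - K)) = sa (recon H J) (K - J) * sa (recon H J) (W - K)"
    using assms by (intro sa_Un_separated recon_separated) (auto intro: finite_subset)
  ultimately have "sa (recon H J) (W - J) = sa (recon H J) (K - J) * sa (recon H J) (W - K)"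
    by simp
  also have "sa (recon H J) (W - K) = sa H (W - K)"
    using assms by (intro sa_cong_edges) (simp_all add: recon_outside)
  finally show ?thesis .
qed

text \<open>Along a walk in \<open>H|W\<close> starting outside \<open>J\<close>, the last vertex \<open>w\<close> visited outside \<open>J\<close> is
  reachable in the reconnected complement, and the rest of the walk runs inside \<open>J \<union> {w}\<close>.\<close>
lemma rtranclp_adj_recon:
  assumes "(adj H W)\<^sup>*\<^sup>* x z" "x \<in> W - J"
  shows "\<exists>w \<in> W - J. reach (recon H J) (W - J) x w \<and> (adj H (J \<union> {w}))\<^sup>*\<^sup>* w z"
  using assms(1)
proof (induction rule: rtranclp_induct)
  case base
  show ?case using assms(2) reach_refl[of x "W - J"] by blast
next
  case (step z z')
  then obtain w where w: "w \<in> W - J" "reach (recon H J) (W - J) x w" "(adj H (J \<union> {w}))\<^sup>*\<^sup>* w z"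
    by blast
  have z: "z \<in> J \<union> {w}" using rtranclp_adj_in[OF w(3)] by simp
  have z': "z' \<in> W" "{z, z'} \<in> H" "z \<noteq> z'" using step.hyps(2) unfolding adj_def by auto
  show ?case
  proof (cases "z' \<in> J \<or> z' = w")
    case True
    then have "adj H (J \<union> {w}) z z'" using z z' unfolding adj_def by auto
    with w(3) have "(adj H (J \<union> {w}))\<^sup>*\<^sup>* w z'" by (rule rtranclp.rtrancl_into_rtrancl)
    with w(1,2) show ?thesis by blast
  next
    case False
    have "(adj H (J \<union> {w, z'}))\<^sup>*\<^sup>* w z"
      using rtranclp_mono[of "adj H (J \<union> {w})" "adj H (J \<union> {w, z'})"] w(3)
      by (auto simp: adj_def le_fun_def)
    moreover have "adj H (J \<union> {w, z'}) z z'" using z z' unfolding adj_def by auto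
    ultimately have "reach H (J \<union> {w, z'}) w z'"
      unfolding reach_def by auto
    then have "adj (recon H J) (W - J) w z'"
      using recon_edges_iff[of w UNIV J z' H] w(1) z'(1) False unfolding adj_def by auto
    then have "reach (recon H J) (W - J) x z'"
      using w(2) adj_imp_reach reach_trans by metis
    moreover have "z' \<in> W - J" using False z'(1) by blast
    ultimately show ?thesis by blast
  qed
qed

lemma recon_connected:
  assumes "connected_graph H W" "W - J \<noteq> {}"
  shows "connected_graph (recon H J) (W - J)"
  unfolding connected_graph_def
proof (intro conjI ballI)
  fix x y assume x: "x \<in> W - J" and y: "y \<in> W - J"
  have "(adj H W)\<^sup>*\<^sup>* x y" using assms(1) x y unfolding connected_graph_def reach_def by simp
  then obtain w where w: "reach (recon H J) (W - J) x w" "(adj H (J \<union> {w}))\<^sup>*\<^sup>* w y"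
    using rtranclp_adj_recon[OF _ x] by blast
  have "y \<in> J \<union> {w}" by (rule rtranclp_adj_in[OF w(2)]) simp
  with y have "y = w" by blast
  with w(1) show "reach (recon H J) (W - J) x y" by simp
qed (use assms(2) in blast)

subsection \<open>Vertex sets bridged by the new edge\<close>

definition bridged_by :: "'a set set \<Rightarrow> 'a \<Rightarrow> 'a \<Rightarrow> 'a set \<Rightarrow> bool" where
  "bridged_by E u v J \<longleftrightarrow>
     u \<in> J \<and> v \<in> J \<and> connected_graph (insert {u, v} E) J \<and> \<not> connected_graph E J"

lemma reach_insert_edge:
  assumes "reach (insert {u, v} E) J u y" "v \<in> J"
  shows "reach E J u y \<or> reach E J v y"
proof -
  have "(adj (insert {u, v} E) J)\<^sup>*\<^sup>* u y" "u \<in> J" using assms(1) by (simp_all add: reach_def)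
  then show ?thesis
  proof (induction rule: rtranclp_induct)
    case (step y z)
    then have "{y, z} = {u, v} \<or> adj E J y z" by (auto simp: adj_def)
    then show ?case
      using step reach_refl[of u J E] reach_refl[OF assms(2), of E] adj_imp_reach reach_trans
      by (metis doubleton_eq_iff)
  qed (simp add: reach_refl)
qed

lemma component_of_insert_edge:
  assumes "u \<notin> component_of E J x" "v \<notin> component_of E J x"
  shows "component_of (insert {u, v} E) J x = component_of E J x"
proof (intro set_eqI iffI)
  fix y assume "y \<in> component_of (insert {u, v} E) J x"
  then have "(adj (insert {u, v} E) J)\<^sup>*\<^sup>* x y" "x \<in> J" by (simp_all add: reach_def)
  then show "y \<in> component_of E J x"
  proof (induction rule: rtranclp_induct)
    case (step y z)
    then have "reach E J x y" by simp
    moreover have "{y, z} \<noteq> {u, v}"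
      using assms calculation by (auto simp: doubleton_eq_iff)
    with step.hyps(2) have "adj E J y z" by (simp add: adj_def)
    ultimately show ?case using adj_imp_reach reach_trans by (metis mem_Collect_eq)
  qed (simp add: reach_refl)
qed (auto intro: reach_mono)

lemma connected_graph_insert_edge:
  assumes "u \<in> J" "v \<in> J" "\<And>y. y \<in> J \<Longrightarrow> reach E J y u \<or> reach E J y v"
  shows "connected_graph (insert {u, v} E) J"
proof -
  let ?H = "insert {u, v} E"
  have vu: "reach ?H J v u"
  proof (cases "u = v")
    case False
    then have "adj ?H J v u" using assms(1,2) unfolding adj_def by (auto simp: insert_commute)
    then show ?thesis by (rule adj_imp_reach)
  qed (simp add: assms(2) reach_refl)
  have "reach ?H J y u" if "y \<in> J" for y
  proof -
    have "reach ?H J y u \<or> reach ?H J y v" using assms(3)[OF that] reach_mono[of J J E ?H] by blast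
    then show ?thesis using vu reach_trans by metis
  qed
  then show ?thesis
    using assms(1) unfolding connected_graph_def by (metis empty_iff reach_sym reach_trans)
qed

lemma bridged_by_split:
  assumes "bridged_by E u v J"
  obtains A where "A \<subseteq> J" "u \<in> A" "v \<in> J - A" "separated E A (J - A)"
    "connected_graph E A" "connected_graph E (J - A)"
proof
  let ?A = "component_of E J u"
  have u: "u \<in> J" and v: "v \<in> J" and "connected_graph (insert {u, v} E) J" "\<not> connected_graph E J"
    using assms unfolding bridged_by_def by blast+
  then have to_u_or_v: "reach E J u y \<or> reach E J v y" if "y \<in> J" for y
    using reach_insert_edge that unfolding connected_graph_def by metis
  have "\<not> reach E J u v"
  proof
    assume uv: "reach E J u v"
    have uy: "reach E J u y" if "y \<in> J" for y
      using to_u_or_v[OF that] reach_trans[OF uv] by blast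
    have "reach E J x y" if "x \<in> J" "y \<in> J" for x y
      using reach_trans[OF reach_sym[OF uy[OF that(1)]] uy[OF that(2)]] .
    then have "connected_graph E J" using u unfolding connected_graph_def by blast
    with \<open>\<not> connected_graph E J\<close> show False ..
  qed
  then show "v \<in> J - ?A" using v by simp
  show "?A \<subseteq> J" "u \<in> ?A" "connected_graph E ?A"
    using u component_of_subset component_of_self connected_component_of by simp_all
  show sep: "separated E ?A (J - ?A)" by (rule component_of_separated)
  show "connected_graph E (J - ?A)"
    unfolding connected_graph_def
  proof (intro conjI ballI)
    show "J - ?A \<noteq> {}" using \<open>v \<in> J - ?A\<close> by blast
    fix x y assume x: "x \<in> J - ?A" and y: "y \<in> J - ?A"
    then have "reach E J v x" "reach E J v y" using to_u_or_v[of x] to_u_or_v[of y] by simp_all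
    then have r: "reach E J x y" using reach_sym reach_trans by metis
    have "separated E (J - ?A) (J - (J - ?A))"
      using separated_sym[OF sep] by (simp add: Diff_Diff_Int Int_absorb1 component_of_subset)
    then show "reach E (J - ?A) x y"
      by (rule reach_separated[OF r x Diff_subset])
  qed
qed

lemma b_num_bridged_by:
  assumes "finite J" "bridged_by E u v J"
  obtains A where "A \<noteq> {}" "A \<subset> J" "connected_graph E A" "connected_graph E (J - A)"
    "b_num E J = b_num E A * b_num E (J - A)"
proof -
  obtain A where A: "A \<subseteq> J" "u \<in> A" "v \<in> J - A" "separated E A (J - A)"
    "connected_graph E A" "connected_graph E (J - A)"
    using bridged_by_split[OF assms(2)] .
  have "A \<noteq> {}" "A \<subset> J" using A(1-3) by blast+
  from this A(5,6) b_num_Diff_separated[OF assms(1) A(1,4)] show ?thesis by (rule that)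
qed

lemma b_num_bridged_by_odd:
  assumes "finite J" "bridged_by E u v J" "odd (card J)"
  shows "b_num E J = 0"
proof -
  obtain A where A: "A \<noteq> {}" "A \<subset> J" "connected_graph E A" "connected_graph E (J - A)"
    "b_num E J = b_num E A * b_num E (J - A)"
    using b_num_bridged_by[OF assms(1,2)] .
  have "finite A" using assms(1) A(2) by (meson finite_subset psubset_imp_subset)
  moreover have "even (card A) \<or> even (card (J - A))"
    using card_psubset_split(1)[OF assms(1) A(2,1)] assms(3) by auto
  ultimately show ?thesis
    using A(3-5) assms(1) b_num_connected_even[of A E] b_num_connected_even[of "J - A" E] by auto
qed

lemma card_Diff_bridged_by:
  assumes "finite W" "J \<subseteq> W" "bridged_by E u v J"
  shows "card W = card J + card (W - J)" "card (W - J) < card W"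
proof -
  show "card W = card J + card (W - J)" using assms(1,2) by (rule card_subset_add_Diff)
  moreover have "card J \<noteq> 0"
    using assms unfolding bridged_by_def by (auto simp: finite_subset)
  ultimately show "card (W - J) < card W" by linarith
qed

lemma bridged_by_odd_even_components:
  fixes E :: "'a set set" and u v :: 'a
  defines "H \<equiv> insert {u, v} E"
  assumes "J \<noteq> {}" "\<forall>C\<in>components E J. odd (card C)" "\<forall>C\<in>components H J. even (card C)"
  shows "bridged_by E u v J"
proof -
  obtain x where x: "x \<in> J" using assms(2) by blast
  have "u \<in> J \<and> v \<in> J"
  proof (rule ccontr)
    assume "\<not> (u \<in> J \<and> v \<in> J)"
    then have "components H J = components E J"
      unfolding H_def components_def reach_def by (simp add: adj_insert_edge_outside)
    moreover have "component_of E J x \<in> components E J" using x unfolding components_def by blast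
    ultimately show False using assms(3,4) by auto
  qed
  then have uv: "u \<in> J" "v \<in> J" by blast+
  have "\<not> connected_graph E J"
  proof
    assume conn: "connected_graph E J"
    then have "connected_graph H J"
      unfolding connected_graph_def H_def using reach_mono[of J J E "insert {u, v} E"] by blast
    with conn assms(3,4) show False by (simp add: components_connected)
  qed
  moreover have "connected_graph H J"
    unfolding H_def
  proof (rule connected_graph_insert_edge[OF uv])
    fix y assume y: "y \<in> J"
    show "reach E J y u \<or> reach E J y v"
    proof (rule ccontr)
      assume "\<not> (reach E J y u \<or> reach E J y v)"
      then have "component_of H J y = component_of E J y"
        unfolding H_def by (intro component_of_insert_edge) auto
      moreover have "component_of H J y \<in> components H J" "component_of E J y \<in> components E J"
        using y unfolding components_def by blast+
      ultimately show False using assms(3,4) by metis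
    qed
  qed
  ultimately show "bridged_by E u v J" using uv unfolding bridged_by_def H_def by simp
qed

lemma bridged_by_iff_components:
  fixes E :: "'a set set" and u v :: 'a
  defines "H \<equiv> insert {u, v} E"
  assumes "finite J" "b_num E J \<noteq> 0"
  shows "bridged_by E u v J \<longleftrightarrow>
    (\<forall>C\<in>components H J. even (card C)) \<and> \<not> (\<forall>C\<in>components E J. even (card C))"
proof
  assume bridged: "bridged_by E u v J"
  then have "u \<in> J" "connected_graph H J" unfolding bridged_by_def H_def by blast+
  moreover have "even (card J)" using b_num_bridged_by_odd[OF assms(2) bridged] assms(3) by blast
  moreover have "component_of E J u \<in> components E J"
    using \<open>u \<in> J\<close> unfolding components_def by blast
  ultimately show "(\<forall>C\<in>components H J. even (card C)) \<and> \<not> (\<forall>C\<in>components E J. even (card C))"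
    using b_num_even_component[OF assms(2)] assms(3) components_connected by fastforce
next
  assume EC: "(\<forall>C\<in>components H J. even (card C)) \<and> \<not> (\<forall>C\<in>components E J. even (card C))"
  then have "J \<noteq> {}" by (auto simp: components_def)
  moreover have "\<forall>C\<in>components E J. odd (card C)"
    using b_num_even_component[OF assms(2)] assms(3) by blast
  ultimately show "bridged_by E u v J"
    using EC unfolding H_def by (intro bridged_by_odd_even_components) auto
qed

subsection \<open>Adding an edge\<close>

lemma sum_Pow_sum_subsets:
  assumes "finite W"
  shows "(\<Sum>I\<in>Pow W. \<Sum>J | J \<subseteq> I \<and> P J. g J (I - J)) = (\<Sum>J | J \<subseteq> W \<and> P J. \<Sum>K\<in>Pow (W - J). g J K)"
proof -
  let ?S = "{J. J \<subseteq> W \<and> P J}"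
  have "(\<Sum>I\<in>Pow W. \<Sum>J | J \<subseteq> I \<and> P J. g J (I - J)) = (\<Sum>I\<in>Pow W. \<Sum>J | J \<in> ?S \<and> J \<subseteq> I. g J (I - J))"
    by (intro sum.cong refl arg_cong2[where f = sum]) auto
  also have "\<dots> = (\<Sum>J\<in>?S. \<Sum>I | I \<in> Pow W \<and> J \<subseteq> I. g J (I - J))"
    using assms by (intro sum.swap_restrict) (auto intro: finite_subset[of _ "Pow W"])
  also have "\<dots> = (\<Sum>J\<in>?S. \<Sum>K\<in>Pow (W - J). g J K)"
  proof (rule sum.cong[OF refl])
    fix J assume "J \<in> ?S"
    then show "(\<Sum>I | I \<in> Pow W \<and> J \<subseteq> I. g J (I - J)) = (\<Sum>K\<in>Pow (W - J). g J K)"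
      by (intro sum.reindex_bij_witness[where i = "\<lambda>K. K \<union> J" and j = "\<lambda>I. I - J"]) auto
  qed
  finally show ?thesis .
qed

definition bridge_correction :: "'a set set \<Rightarrow> 'a \<Rightarrow> 'a \<Rightarrow> 'a set \<Rightarrow> int" where
  "bridge_correction E u v W =
     (\<Sum>J | J \<subseteq> W \<and> bridged_by E u v J. b_num E J * sa (recon (insert {u, v} E) J) (W - J))"

lemma bridge_correction_outside: "u \<notin> W \<or> v \<notin> W \<Longrightarrow> bridge_correction E u v W = 0"
  unfolding bridge_correction_def by (rule sum.neutral) (auto simp: bridged_by_def)

lemma bridge_correction_odd:
  assumes "finite W" "odd (card W)"
  shows "bridge_correction E u v W = 0"
  unfolding bridge_correction_def
proof (rule sum.neutral, rule ballI)
  fix J assume J: "J \<in> {J. J \<subseteq> W \<and> bridged_by E u v J}"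
  have "finite J" using J assms(1) by (auto intro: finite_subset)
  moreover have "card W = card J + card (W - J)"
    using J assms(1) by (simp add: card_subset_add_Diff)
  ultimately show "b_num E J * sa (recon (insert {u, v} E) J) (W - J) = 0"
    using J assms b_num_bridged_by_odd[of J E u v] sa_odd[of "W - J"] by auto
qed

lemma bridged_by_subset_component:
  assumes "bridged_by E u v J" "J \<subseteq> W"
  shows "J \<subseteq> component_of (insert {u, v} E) W u"
proof
  fix y assume "y \<in> J"
  then have "reach (insert {u, v} E) J u y"
    using assms(1) unfolding bridged_by_def connected_graph_def by blast
  then show "y \<in> component_of (insert {u, v} E) W u"
    using reach_mono[OF assms(2)] by blast
qed

lemma bridge_correction_component:
  fixes E :: "'a set set" and u v :: 'a and W :: "'a set"
  defines "H \<equiv> insert {u, v} E"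
  defines "K \<equiv> component_of H W u"
  assumes "finite W"
  shows "bridge_correction E u v W = bridge_correction E u v K * sa E (W - K)"
proof -
  have K: "K \<subseteq> W" "separated H K (W - K)"
    unfolding K_def by (simp_all add: component_of_subset component_of_separated)
  have "J \<subseteq> K" if "J \<subseteq> W" "bridged_by E u v J" for J
    using bridged_by_subset_component[OF that(2,1)] unfolding H_def K_def .
  with K(1) have sets: "{J. J \<subseteq> W \<and> bridged_by E u v J} = {J. J \<subseteq> K \<and> bridged_by E u v J}"
    by blast
  have "sa (recon H J) (W - J) = sa (recon H J) (K - J) * sa E (W - K)" if "J \<subseteq> K" for J
  proof -
    have "u \<notin> W - K"
      unfolding K_def by (auto intro: reach_refl)
    then have "sa H (W - K) = sa E (W - K)"
      unfolding H_def using assms(3) by (intro sa_insert_edge_outside) auto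
    with sa_recon_split[OF assms(3) K that] show ?thesis by simp
  qed
  then show ?thesis
    unfolding bridge_correction_def sets H_def[symmetric] by (simp add: sum_distrib_right mult.assoc)
qed

lemma sum_Pow_bridge_correction:
  "finite W \<Longrightarrow> (\<Sum>I\<in>Pow W. bridge_correction E u v I) =
     (\<Sum>J | J \<subseteq> W \<and> bridged_by E u v J. b_num E J * b_num (recon (insert {u, v} E) J) (W - J))"
  unfolding bridge_correction_def
  by (subst sum_Pow_sum_subsets) (simp_all add: b_num_def sum_distrib_left)

lemma sum_bridged_b_num_recon:
  fixes E :: "'a set set" and u v :: 'a
  defines "H \<equiv> insert {u, v} E"
  assumes "finite W" "u \<in> W" "v \<in> W" "connected_graph H W" "even (card W)"
  shows "(\<Sum>J | J \<subseteq> W \<and> bridged_by E u v J. b_num E J * b_num (recon H J) (W - J)) = b_num E W"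
proof -
  let ?f = "\<lambda>J. b_num E J * b_num (recon H J) (W - J)"
  have "?f J = 0" if "J \<subseteq> W" "bridged_by E u v J" "J \<noteq> W" for J
  proof (cases "even (card J)")
    case True
    have "card W = card J + card (W - J)"
      using that assms(2) by (simp add: card_subset_add_Diff)
    then have "even (card (W - J))" using True assms(6) by simp
    moreover have "connected_graph (recon H J) (W - J)"
      using that by (intro recon_connected assms(5)) blast
    ultimately show ?thesis using assms(2) by (simp add: b_num_connected_even)
  next
    case False
    then show ?thesis
      using that(1,2) assms(2) b_num_bridged_by_odd by (metis finite_subset mult_eq_0_iff)
  qed
  then have "(\<Sum>J | J \<subseteq> W \<and> bridged_by E u v J. ?f J) = (\<Sum>J | J = W \<and> bridged_by E u v J. ?f J)"
    using assms(2) by (intro sum.mono_neutral_right) (auto intro: finite_subset[of _ "Pow W"])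
  also have "\<dots> = b_num E W"
  proof (cases "bridged_by E u v W")
    case True
    then have "{J. J = W \<and> bridged_by E u v J} = {W}" by blast
    then show ?thesis by (simp add: b_num_empty)
  next
    case False
    then have "{J. J = W \<and> bridged_by E u v J} = {}" by blast
    moreover have "connected_graph E W" using False assms(3-5) unfolding bridged_by_def H_def by blast
    ultimately show ?thesis using assms(2,6) by (simp add: b_num_connected_even)
  qed
  finally show ?thesis .
qed

lemma sa_insert_edge_disconnected:
  fixes E :: "'a set set" and u v :: 'a and W :: "'a set"
  defines "H \<equiv> insert {u, v} E"
  defines "K \<equiv> component_of H W u"
  assumes "finite W" "u \<in> W"
    and IH: "sa H K = sa E K - bridge_correction E u v K"
  shows "sa H W = sa E W - bridge_correction E u v W"
proof -
  have K: "K \<subseteq> W" "separated H K (W - K)"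
    unfolding K_def by (rule component_of_subset, rule component_of_separated)
  have "separated E K (W - K)" using K(2) unfolding H_def by (rule separated_mono) auto
  then have "sa H W = sa H K * sa H (W - K)" "sa E W = sa E K * sa E (W - K)"
    using sa_Diff_separated[OF assms(3) K] sa_Diff_separated[OF assms(3) K(1)] by simp_all
  moreover have "sa H (W - K) = sa E (W - K)"
    unfolding H_def using assms(3,4) by (intro sa_insert_edge_outside) (auto simp: K_def reach_refl)
  ultimately show ?thesis
    using IH bridge_correction_component[OF assms(3), of E u v]
    unfolding H_def K_def by (simp add: algebra_simps)
qed

lemma sa_insert_edge_connected_even:
  fixes E :: "'a set set" and u v :: 'a and W :: "'a set"
  defines "H \<equiv> insert {u, v} E"
  assumes "finite W" "u \<in> W" "v \<in> W" "connected_graph H W" "even (card W)"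
    and IH: "\<And>I. I \<subset> W \<Longrightarrow> sa H I = sa E I - bridge_correction E u v I"
  shows "sa H W = sa E W - bridge_correction E u v W"
proof -
  let ?D = "\<lambda>I. sa H I - sa E I + bridge_correction E u v I"
  have "(\<Sum>I\<in>Pow W. sa H I - sa E I) = - b_num E W"
    using b_num_connected_even[OF assms(2,5,6)] by (simp add: b_num_def sum_subtractf)
  moreover have "(\<Sum>I\<in>Pow W. bridge_correction E u v I) = b_num E W"
    using sum_Pow_bridge_correction[OF assms(2)] sum_bridged_b_num_recon[OF assms(2-6)[unfolded H_def]]
    unfolding H_def by simp
  ultimately have "(\<Sum>I\<in>Pow W. ?D I) = 0" by (simp add: sum.distrib)
  moreover have "?D I = 0" if "I \<subset> W" for I
    using IH[OF that] by simp
  ultimately show ?thesis using sum_Pow_psubsets[OF assms(2), of ?D] by simp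
qed

theorem sa_insert_edge:
  "finite W \<Longrightarrow> sa (insert {u, v} E) W = sa E W - bridge_correction E u v W"
proof (induction "card W" arbitrary: W rule: less_induct)
  case less
  have IH: "sa (insert {u, v} E) I = sa E I - bridge_correction E u v I" if "I \<subset> W" for I
    using less.hyps[OF psubset_card_mono[OF less.prems that]] less.prems that
    by (meson finite_subset psubset_imp_subset)
  consider (outside) "u \<notin> W \<or> v \<notin> W"
    | (disconnected) "u \<in> W" "\<not> connected_graph (insert {u, v} E) W"
    | (odd) "odd (card W)"
    | (even) "u \<in> W" "v \<in> W" "connected_graph (insert {u, v} E) W" "even (card W)"
    by blast
  then show ?case
  proof cases
    case outside
    then show ?thesis using less.prems by (simp add: sa_insert_edge_outside bridge_correction_outside)
  next
    case disconnected
    then show ?thesis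
      using sa_insert_edge_disconnected[OF less.prems] IH[OF component_of_psubset] by simp
  next
    case odd
    then show ?thesis using less.prems by (simp add: sa_odd bridge_correction_odd)
  next
    case even
    then show ?thesis using sa_insert_edge_connected_even[OF less.prems _ _ _ _ IH] by simp
  qed
qed

lemma b_num_insert_edge:
  assumes "finite W"
  shows "b_num (insert {u, v} E) W =
    b_num E W - (\<Sum>J | J \<subseteq> W \<and> bridged_by E u v J. b_num E J * b_num (recon (insert {u, v} E) J) (W - J))"
proof -
  have "b_num (insert {u, v} E) W = (\<Sum>I\<in>Pow W. sa E I - bridge_correction E u v I)"
    unfolding b_num_def using assms by (intro sum.cong refl sa_insert_edge) (auto intro: finite_subset)
  then show ?thesis
    using assms by (simp add: sum_subtractf b_num_def[of E W] sum_Pow_bridge_correction)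
qed

subsection \<open>Signs\<close>

definition half_signed :: "nat \<Rightarrow> int \<Rightarrow> bool" where
  "half_signed n x \<longleftrightarrow> 0 \<le> (-1) ^ (n div 2) * x"

lemma half_signed_0 [simp]: "half_signed n 0"
  by (simp add: half_signed_def)

lemma half_signed_1: "n < 2 \<Longrightarrow> half_signed n 1"
  by (simp add: half_signed_def)

lemma half_signed_diff_sum:
  assumes "half_signed n x" "\<And>J. J \<in> S \<Longrightarrow> half_signed n (- y J)"
  shows "half_signed n (x - sum y S)"
proof -
  have "0 \<le> (\<Sum>J\<in>S. (-1) ^ (n div 2) * - y J)"
    using assms(2) unfolding half_signed_def by (intro sum_nonneg) auto
  moreover have "(-1) ^ (n div 2) * (x - sum y S) = (-1) ^ (n div 2) * x + (\<Sum>J\<in>S. (-1) ^ (n div 2) * - y J)"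
    by (simp add: sum_distrib_left[symmetric] sum_negf right_diff_distrib)
  ultimately show ?thesis
    using assms(1) unfolding half_signed_def by simp
qed

lemma abs_diff_sum_half_signed:
  assumes "half_signed n x" "\<And>J. J \<in> S \<Longrightarrow> half_signed n (- y J)"
  shows "\<bar>x - sum y S\<bar> = \<bar>x\<bar> + (\<Sum>J\<in>S. \<bar>y J\<bar>)"
proof -
  have abs_eq: "\<bar>z\<bar> = (-1) ^ (n div 2) * z" if "half_signed n z" for z
    using that unfolding half_signed_def by (cases "even (n div 2)") auto
  have "\<bar>x - sum y S\<bar> = (-1) ^ (n div 2) * x + (\<Sum>J\<in>S. (-1) ^ (n div 2) * - y J)"
    using abs_eq[OF half_signed_diff_sum[OF assms]]
    by (simp add: sum_distrib_left[symmetric] sum_negf right_diff_distrib)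
  also have "\<dots> = \<bar>x\<bar> + (\<Sum>J\<in>S. \<bar>y J\<bar>)"
  proof -
    have "(-1) ^ (n div 2) * - y J = \<bar>y J\<bar>" if "J \<in> S" for J
      using abs_eq[OF assms(2)[OF that]] by simp
    then show ?thesis using abs_eq[OF assms(1)] by simp
  qed
  finally show ?thesis .
qed

lemma half_signed_mult_even:
  assumes "even m" "half_signed m x" "half_signed n y"
  shows "half_signed (m + n) (x * y)"
proof -
  have "(m + n) div 2 = m div 2 + n div 2" using assms(1) by auto
  then have eq: "(-1::int) ^ ((m + n) div 2) * (x * y) = ((-1) ^ (m div 2) * x) * ((-1) ^ (n div 2) * y)"
    by (simp only: power_add mult_ac)
  show ?thesis
    using assms(2,3) unfolding half_signed_def eq by (rule mult_nonneg_nonneg)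
qed

lemma half_signed_mult_odd:
  assumes "odd m" "odd n" "half_signed m x" "half_signed n y"
  shows "half_signed (m + n) (- (x * y))"
proof -
  have "(m + n) div 2 = m div 2 + n div 2 + 1" using assms(1,2) by presburger
  then have "(-1::int) ^ ((m + n) div 2) * - (x * y) = ((-1) ^ (m div 2) * x) * ((-1) ^ (n div 2) * y)"
    by (simp add: power_add mult_ac)
  with assms(3,4) show ?thesis unfolding half_signed_def by simp
qed

definition sign_rule :: "'a set set \<Rightarrow> 'a set \<Rightarrow> bool" where
  "sign_rule E W \<longleftrightarrow>
     (even (card W) \<longrightarrow> half_signed (card W) (sa E W)) \<and>
     (odd (card W) \<longrightarrow> connected_graph E W \<longrightarrow> half_signed (card W) (b_num E W))"

lemma half_signed_neg_b_num_bridged: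
  fixes J :: "'a set"
  assumes "finite J" "bridged_by E u v J" "even (card J)"
    and IH: "\<And>F (X :: 'a set). finite X \<Longrightarrow> card X < card J \<Longrightarrow> sign_rule F X"
  shows "half_signed (card J) (- b_num E J)"
proof -
  obtain A where A: "A \<noteq> {}" "A \<subset> J" "connected_graph E A" "connected_graph E (J - A)"
    "b_num E J = b_num E A * b_num E (J - A)"
    using b_num_bridged_by[OF assms(1,2)] .
  note card = card_psubset_split[OF assms(1) A(2,1)]
  have fin: "finite A" "finite (J - A)" using assms(1) A(2) by (auto intro: finite_subset)
  show ?thesis
  proof (cases "even (card A)")
    case True
    then show ?thesis using A(3,5) fin by (simp add: b_num_connected_even)
  next
    case False
    moreover from False have "odd (card (J - A))" using card(1) assms(3) by simp
    moreover have "half_signed (card A) (b_num E A)" "half_signed (card (J - A)) (b_num E (J - A))"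
      using IH[OF fin(1) card(2)] IH[OF fin(2) card(3)] A(3,4) False \<open>odd (card (J - A))\<close>
      unfolding sign_rule_def by auto
    ultimately show ?thesis using half_signed_mult_odd card(1) A(5) by metis
  qed
qed

lemma half_signed_bridge_term:
  fixes W :: "'a set"
  assumes "finite W" "J \<subseteq> W" "bridged_by E u v J"
    and IH: "\<And>F (X :: 'a set). finite X \<Longrightarrow> card X < card W \<Longrightarrow> sign_rule F X"
    and "even (card J) \<Longrightarrow> half_signed (card (W - J)) y"
  shows "half_signed (card W) (- (b_num E J * y))"
proof -
  have fin: "finite J" using assms(2,1) by (rule finite_subset)
  have card: "card W = card J + card (W - J)" using assms(1,2) by (rule card_subset_add_Diff)
  show ?thesis
  proof (cases "even (card J)")
    case True
    have "half_signed (card J) (- b_num E J)"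
      by (rule half_signed_neg_b_num_bridged[OF fin assms(3) True], rule IH) (use card in auto)
    from half_signed_mult_even[OF True this assms(5)[OF True]] show ?thesis
      using card by simp
  next
    case False
    then show ?thesis using b_num_bridged_by_odd[OF fin assms(3)] by simp
  qed
qed

lemma half_signed_sa_disconnected:
  fixes W :: "'a set"
  assumes "finite W" "even (card W)" "W \<noteq> {}" "\<not> connected_graph E W"
    and IH: "\<And>F (X :: 'a set). finite X \<Longrightarrow> card X < card W \<Longrightarrow> sign_rule F X"
  shows "half_signed (card W) (sa E W)"
proof -
  obtain A where A: "A \<noteq> {}" "A \<subset> W" "sa E W = sa E A * sa E (W - A)"
    using sa_split[OF assms(1,3,4)] .
  note card = card_psubset_split[OF assms(1) A(2,1)]
  have fin: "finite A" "finite (W - A)" using assms(1) A(2) by (auto intro: finite_subset)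
  show ?thesis
  proof (cases "even (card A)")
    case True
    moreover from True have "even (card (W - A))" using card(1) assms(2) by simp
    ultimately have "half_signed (card A) (sa E A)" "half_signed (card (W - A)) (sa E (W - A))"
      using IH[OF fin(1) card(2)] IH[OF fin(2) card(3)] unfolding sign_rule_def by auto
    then show ?thesis using half_signed_mult_even[OF True] card(1) A(3) by metis
  qed (use A(3) fin(1) in \<open>simp add: sa_odd\<close>)
qed

lemma half_signed_sa_step:
  fixes W :: "'a set"
  assumes "finite W" "even (card W)"
    and IH: "\<And>F (X :: 'a set). finite X \<Longrightarrow> card X < card W \<Longrightarrow> sign_rule F X"
    and edge_IH: "\<And>a b. {a, b} \<in> E \<Longrightarrow> a \<in> W \<Longrightarrow> b \<in> W \<Longrightarrow> sign_rule (E - {{a, b}}) W"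
  shows "half_signed (card W) (sa E W)"
proof -
  consider "W = {}" | "W \<noteq> {}" "\<not> connected_graph E W" | (connected) "connected_graph E W"
    by blast
  then show ?thesis
  proof cases
    case connected
    then have "card W \<noteq> 0" using assms(1) unfolding connected_graph_def by simp
    then have "2 \<le> card W" using assms(2) by presburger
    then obtain a b where ab: "a \<in> W" "b \<in> W" "{a, b} \<in> E"
      using connected_graph_obtain_edge[OF connected] by blast
    let ?E' = "E - {{a, b}}"
    have "sa E W = sa ?E' W - bridge_correction ?E' a b W"
      using sa_insert_edge[OF assms(1), of a b ?E'] insert_Diff[OF ab(3)] by simp
    also have "half_signed (card W) \<dots>"
      unfolding bridge_correction_def
    proof (rule half_signed_diff_sum)
      show "half_signed (card W) (sa ?E' W)"
        using edge_IH[OF ab(3,1,2)] assms(2) unfolding sign_rule_def by simp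
      fix J assume J: "J \<in> {J. J \<subseteq> W \<and> bridged_by ?E' a b J}"
      note card = card_Diff_bridged_by[OF assms(1), of J ?E' a b]
      show "half_signed (card W) (- (b_num ?E' J * sa (recon (insert {a, b} ?E') J) (W - J)))"
        using J card assms(1,2) IH[of "W - J"] unfolding sign_rule_def
        by (intro half_signed_bridge_term[OF assms(1) _ _ IH]) auto
    qed
    finally show ?thesis .
  qed (simp_all add: sa_empty half_signed_1 half_signed_sa_disconnected[OF assms(1,2) _ _ IH])
qed

lemma half_signed_b_num_step:
  fixes W :: "'a set"
  assumes "finite W" "odd (card W)" "connected_graph E W"
    and IH: "\<And>F (X :: 'a set). finite X \<Longrightarrow> card X < card W \<Longrightarrow> sign_rule F X"
    and edge_IH: "\<And>a b. {a, b} \<in> E \<Longrightarrow> a \<in> W \<Longrightarrow> b \<in> W \<Longrightarrow> sign_rule (E - {{a, b}}) W"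
  shows "half_signed (card W) (b_num E W)"
proof (cases "card W = 1")
  case True
  then show ?thesis by (auto simp: card_1_singleton_iff b_num_singleton half_signed_1)
next
  case False
  then have "2 \<le> card W" using assms(2) by presburger
  then obtain a b where ab: "a \<in> W" "b \<in> W" "{a, b} \<in> E"
    using connected_graph_obtain_edge[OF assms(3)] by blast
  let ?E' = "E - {{a, b}}"
  have E: "insert {a, b} ?E' = E" using ab(3) by (rule insert_Diff)
  have "b_num E W = b_num ?E' W -
      (\<Sum>J | J \<subseteq> W \<and> bridged_by ?E' a b J. b_num ?E' J * b_num (recon E J) (W - J))"
    using b_num_insert_edge[OF assms(1), of a b ?E'] unfolding E .
  also have "half_signed (card W) \<dots>"
  proof (rule half_signed_diff_sum)
    show "half_signed (card W) (b_num ?E' W)"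
    proof (cases "connected_graph ?E' W")
      case True
      then show ?thesis using edge_IH[OF ab(3,1,2)] assms(2) unfolding sign_rule_def by simp
    next
      case False
      then have "bridged_by ?E' a b W" using ab(1,2) assms(3) unfolding bridged_by_def E by simp
      then show ?thesis using b_num_bridged_by_odd[OF assms(1) _ assms(2)] by simp
    qed
    fix J assume J: "J \<in> {J. J \<subseteq> W \<and> bridged_by ?E' a b J}"
    note card = card_Diff_bridged_by[OF assms(1), of J ?E' a b]
    show "half_signed (card W) (- (b_num ?E' J * b_num (recon E J) (W - J)))"
    proof (rule half_signed_bridge_term[OF assms(1) _ _ IH])
      assume "even (card J)"
      then have "odd (card (W - J))" using J card assms(2) by simp
      moreover from this have "W - J \<noteq> {}" by (metis card.empty even_zero)
      then have "connected_graph (recon E J) (W - J)" by (rule recon_connected[OF assms(3)])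
      ultimately show "half_signed (card (W - J)) (b_num (recon E J) (W - J))"
        using J card IH[of "W - J"] assms(1) unfolding sign_rule_def by simp
    qed (use J in auto)
  qed
  finally show ?thesis .
qed

lemma sign_rule_holds: "finite W \<Longrightarrow> sign_rule E W"
proof (induction "card W" arbitrary: W E rule: less_induct)
  case (less W)
  have IH: "\<And>F (X :: 'a set). finite X \<Longrightarrow> card X < card W \<Longrightarrow> sign_rule F X"
    using less.hyps by blast
  have fin_edges: "finite {e \<in> E. e \<subseteq> W}" for E :: "'a set set"
    using less.prems by (auto intro: finite_subset[of _ "Pow W"])
  show ?case
  proof (induction "card {e \<in> E. e \<subseteq> W}" arbitrary: E rule: less_induct)
    case (less E)
    have edge_IH: "sign_rule (E - {{a, b}}) W" if "{a, b} \<in> E" "a \<in> W" "b \<in> W" for a b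
    proof (rule less.hyps)
      have "{e \<in> E - {{a, b}}. e \<subseteq> W} \<subset> {e \<in> E. e \<subseteq> W}" using that by blast
      then show "card {e \<in> E - {{a, b}}. e \<subseteq> W} < card {e \<in> E. e \<subseteq> W}"
        by (rule psubset_card_mono[OF fin_edges])
    qed
    show ?case
      unfolding sign_rule_def
      using half_signed_sa_step[OF \<open>finite W\<close> _ IH edge_IH]
        half_signed_b_num_step[OF \<open>finite W\<close> _ _ IH edge_IH] by simp
  qed
qed

theorem a_num_insert_edge:
  assumes "finite W" "even (card W)"
  shows "a_num (insert {u, v} E) W = a_num E W +
    (\<Sum>J | J \<subseteq> W \<and> bridged_by E u v J. \<bar>b_num E J\<bar> * a_num (recon (insert {u, v} E) J) (W - J))"
proof -
  let ?H = "insert {u, v} E"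
  have "a_num ?H W = \<bar>sa E W - bridge_correction E u v W\<bar>"
    unfolding a_num_def using sa_insert_edge[OF assms(1)] by simp
  also have "\<dots> = \<bar>sa E W\<bar> +
      (\<Sum>J | J \<subseteq> W \<and> bridged_by E u v J. \<bar>b_num E J * sa (recon ?H J) (W - J)\<bar>)"
    unfolding bridge_correction_def
  proof (rule abs_diff_sum_half_signed)
    show "half_signed (card W) (sa E W)"
      using sign_rule_holds[OF assms(1)] assms(2) unfolding sign_rule_def by simp
    fix J assume J: "J \<in> {J. J \<subseteq> W \<and> bridged_by E u v J}"
    show "half_signed (card W) (- (b_num E J * sa (recon ?H J) (W - J)))"
    proof (rule half_signed_bridge_term[OF assms(1) _ _ sign_rule_holds])
      assume "even (card J)"
      then have "even (card (W - J))" using J assms(2) card_Diff_bridged_by[OF assms(1)] by auto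
      then show "half_signed (card (W - J)) (sa (recon ?H J) (W - J))"
        using sign_rule_holds[of "W - J"] assms(1) unfolding sign_rule_def by simp
    qed (use J in auto)
  qed
  finally show ?thesis by (simp add: a_num_def abs_mult)
qed

theorem mainTheorem7:
  fixes V :: "'a set" and E :: "'a set set" and i :: nat and u v :: 'a
  assumes "simple_graph V E"
    and "card V = 2 * i"
    and "u \<in> V" and "v \<in> V" and "u \<noteq> v"
  shows "a_num (insert {u, v} E) V =
           a_num E V +
           (\<Sum>J \<in> EC (insert {u, v} E) V - EC E V.
              \<bar>b_num E J\<bar> * a_num (recon_edges (insert {u, v} E) V J) (V - J))"
proof -
  let ?H = "insert {u, v} E"
  let ?S = "{J. J \<subseteq> V \<and> bridged_by E u v J}"
  let ?X = "EC ?H V - EC E V"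
  let ?f = "\<lambda>J. \<bar>b_num E J\<bar> * a_num (recon_edges ?H V J) (V - J)"
  let ?N = "{J. b_num E J \<noteq> 0}"
  have fin: "finite V" using assms(1) unfolding simple_graph_def by blast
  have "a_num ?H V = a_num E V + (\<Sum>J\<in>?S. ?f J)"
    using a_num_insert_edge[OF fin, of u v E] assms(2) by (simp add: a_num_def sa_recon_edges[OF fin])
  moreover have "(\<Sum>J\<in>?S. ?f J) = (\<Sum>J\<in>?S \<inter> ?N. ?f J)" "(\<Sum>J\<in>?X. ?f J) = (\<Sum>J\<in>?X \<inter> ?N. ?f J)"
    using fin by (auto intro!: sum.mono_neutral_right intro: finite_subset[of _ "Pow V"] simp: EC_def)
  moreover have "J \<in> ?S \<longleftrightarrow> J \<in> ?X" if "J \<subseteq> V" "b_num E J \<noteq> 0" for J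
    using bridged_by_iff_components[OF finite_subset[OF that(1) fin] that(2)] that(1)
    unfolding EC_def by auto
  then have "?S \<inter> ?N = ?X \<inter> ?N" unfolding EC_def by blast
  ultimately show ?thesis by simp
qed

end
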